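(* Let $a:\mathbb R^d\to\mathcal S_d^+$ be continuous with $\|a(x)\|\le\Lambda$ and $\operatorname{Tr}a(x)\ge\lambda$ for all $x$, and assume the martingale problem for $L$ is well-posed, with solutions $(\mathbb P^x)_{x\in\mathbb R^d}$. Let $(x_n)_{n\ge1}$ be a dense sequence in $\mathbb R^d$ and define the measure $\mathfrak m(B):=\sum_{n\ge1}2^{-n}R_1\mathbf 1_B(x_n)$ for Borel $B\subset\mathbb R^d$. If $B$ is a Borel set with $\mathfrak m(B)=0$, then $\mathbb R^d\setminus B$ is dense in $\mathbb R^d$.
   Context: Fix $d\ge1$, $\alpha\in(0,2)$, $\lambda,\Lambda>0$. $\mathcal S_d^+$: symmetric non-negative definite real $d\times d$ matrices, $\|a\|=\sum|a_{ij}|$. $Lu(x)=\frac12\int_{\mathbb R^d}[u(x+z)+u(x-z)-2u(x)]\frac{\langle a(x)z,z\rangle}{|z|^{d+\alpha+2}}dz$ on $C_c^2(\mathbb R^d)$. $\mathcal D$: Skorokhod space of càdlàg paths, $X_t$ canonical process, $\mathcal F_t=\sigma(X_s,s\le t)$. Well-posedness: for every Borel probability $\nu$ on $\mathbb R^d$ a unique probability on $\mathcal D$ with $X_0\sim\nu$ and $f(X_t)-f(X_0)-\int_0^tLf(X_r)dr$ an $(\mathcal F_t)$-martingale for all $f\in C_c^\infty$; $\mathbb P^x$ the solution with $\nu=\delta_x$. $R_1f(x)=\mathbb E^x\int_0^\infty e^{-t}f(X_t)\,dt$ for bounded Borel $f$. *)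

theory Defs
  imports "HOL-Analysis.Analysis" "HOL-Probability.Probability"
begin

coinductive smooth_fun :: "(real^'n \<Rightarrow> real) \<Rightarrow> bool" where
  "(\<forall>x. g differentiable (at x)) \<Longrightarrow>
   (\<forall>i. smooth_fun (\<lambda>x. frechet_derivative g (at x) (axis i 1))) \<Longrightarrow> smooth_fun g"

definition Cc_inf :: "(real^'n \<Rightarrow> real) set" where
  "Cc_inf = {f. smooth_fun f \<and> compact (closure {x. f x \<noteq> 0})}"

definition Lop :: "real \<Rightarrow> (real^'n \<Rightarrow> real^'n^'n) \<Rightarrow> (real^'n \<Rightarrow> real) \<Rightarrow> real^'n \<Rightarrow> real" where
  "Lop \<alpha> a f x = 1/2 * (\<integral>z. (f (x + z) + f (x - z) - 2 * f x) *
       ((a x *v z) \<bullet> z) / norm z powr (real CARD('n) + \<alpha> + 2) \<partial>lborel)"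

text \<open>Paths are functions on the reals; only times t >= 0 matter, and we normalise
by the constant extension omega t = omega 0 for t < 0.\<close>
definition cadlag_paths :: "(real \<Rightarrow> real^'n) set" where
  "cadlag_paths = {\<omega>. (\<forall>t<0. \<omega> t = \<omega> 0) \<and>
      (\<forall>t\<ge>0. continuous (at_right t) \<omega> \<and> (0 < t \<longrightarrow> (\<exists>l. (\<omega> \<longlongrightarrow> l) (at_left t))))}"

definition filt :: "real \<Rightarrow> (real \<Rightarrow> real^'n) measure" where
  "filt s = sigma cadlag_paths
     {(\<lambda>\<omega>. \<omega> r) -` A \<inter> cadlag_paths | r A. 0 \<le> r \<and> r \<le> s \<and> A \<in> sets borel}"

definition Dmeas :: "(real \<Rightarrow> real^'n) measure" where
  "Dmeas = sigma cadlag_paths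
     {(\<lambda>\<omega>. \<omega> r) -` A \<inter> cadlag_paths | r A. 0 \<le> r \<and> A \<in> sets borel}"

definition is_martingale ::
  "'a measure \<Rightarrow> (real \<Rightarrow> 'a measure) \<Rightarrow> (real \<Rightarrow> 'a \<Rightarrow> real) \<Rightarrow> bool" where
  "is_martingale P F M \<longleftrightarrow>
     (\<forall>t\<ge>0. integrable P (M t) \<and> M t \<in> borel_measurable (F t)) \<and>
     (\<forall>s t A. 0 \<le> s \<longrightarrow> s \<le> t \<longrightarrow> A \<in> sets (F s) \<longrightarrow>
        (\<integral>\<omega>\<in>A. M t \<omega> \<partial>P) = (\<integral>\<omega>\<in>A. M s \<omega> \<partial>P))"

definition solves_MP ::
  "real \<Rightarrow> (real^'n \<Rightarrow> real^'n^'n) \<Rightarrow> (real^'n) measure \<Rightarrow> (real \<Rightarrow> real^'n) measure \<Rightarrow> bool" where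
  "solves_MP \<alpha> a \<nu> P \<longleftrightarrow>
     sets P = sets Dmeas \<and> space P = space Dmeas \<and> prob_space P \<and>
     distr P borel (\<lambda>\<omega>. \<omega> 0) = \<nu> \<and>
     (\<forall>f\<in>Cc_inf. is_martingale P filt
        (\<lambda>t \<omega>. f (\<omega> t) - f (\<omega> 0) - (\<integral>r\<in>{0..t}. Lop \<alpha> a f (\<omega> r) \<partial>lborel)))"

definition MP_well_posed :: "real \<Rightarrow> (real^'n \<Rightarrow> real^'n^'n) \<Rightarrow> bool" where
  "MP_well_posed \<alpha> a \<longleftrightarrow>
     (\<forall>\<nu>::(real^'n) measure. prob_space \<nu> \<and> sets \<nu> = sets borel \<longrightarrow>
        (\<exists>!P. solves_MP \<alpha> a \<nu> P))"

definition R1 :: "(real^'n \<Rightarrow> (real \<Rightarrow> real^'n) measure) \<Rightarrow> (real^'n \<Rightarrow> real) \<Rightarrow> real^'n \<Rightarrow> real" where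
  "R1 Px f x = (\<integral>\<omega>. (\<integral>t\<in>{0..}. exp (- t) * f (\<omega> t) \<partial>lborel) \<partial>Px x)"

definition mat_norm1 :: "real^'n^'n \<Rightarrow> real" where
  "mat_norm1 A = (\<Sum>i\<in>UNIV. \<Sum>j\<in>UNIV. \<bar>A $ i $ j\<bar>)"

definition mat_trace :: "real^'n^'n \<Rightarrow> real" where
  "mat_trace A = (\<Sum>i\<in>UNIV. A $ i $ i)"

end

theory Submission
  imports Defs "HOL-Probability.Sinc_Integral"
begin

text \<open>If the complement of \<open>B\<close> is not dense, \<open>B\<close> has an interior point, and by density
some \<open>x_n\<close> lies in the interior of \<open>B\<close>. Under \<open>P^{x_n}\<close> the canonical process starts at \<open>x_n\<close>
and is right continuous, so every path stays in \<open>B\<close> for a positive time; its discounted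
occupation time of \<open>B\<close> is therefore positive, and so is \<open>R_1 1_B(x_n)\<close>. This contradicts
\<open>m(B) = 0\<close>, a series of nonnegative terms. Beyond \<open>P^x\<close> being a solution started at \<open>x\<close>,
none of the hypotheses on \<open>a\<close> is needed.\<close>

lemma space_Dmeas: "space (Dmeas :: (real \<Rightarrow> real^'n) measure) = cadlag_paths"
  unfolding Dmeas_def by (rule space_measure_of) auto

lemma sets_Dmeas:
  "sets (Dmeas :: (real \<Rightarrow> real^'n) measure) = sigma_sets cadlag_paths
     {(\<lambda>\<omega>. \<omega> r) -` A \<inter> cadlag_paths | r A. 0 \<le> r \<and> A \<in> sets borel}"
  unfolding Dmeas_def by (rule sets_measure_of) auto

lemma measurable_path_eval_Dmeas:
  assumes "0 \<le> r"
  shows "(\<lambda>\<omega>. \<omega> r) \<in> borel_measurable (Dmeas :: (real \<Rightarrow> real^'n) measure)"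
proof (rule measurableI)
  fix A :: "(real^'n) set" assume "A \<in> sets borel"
  then show "(\<lambda>\<omega>. \<omega> r) -` A \<inter> space Dmeas \<in> sets (Dmeas :: (real \<Rightarrow> real^'n) measure)"
    using assms unfolding space_Dmeas sets_Dmeas by (intro sigma_sets.Basic) blast
qed auto

lemma cadlag_path_dyadic_tendsto:
  fixes \<omega> :: "real \<Rightarrow> real^'n"
  assumes "\<omega> \<in> cadlag_paths"
  shows "(\<lambda>k::nat. \<omega> (real (nat \<lceil>2^k * t\<rceil>) / 2^k)) \<longlonglongrightarrow> \<omega> t"
proof (cases "t \<le> 0")
  case True
  then have "nat \<lceil>2^k * t\<rceil> = 0" for k :: nat
    by (simp add: mult_nonneg_nonpos)
  moreover have "\<omega> t = \<omega> 0"
    using assms True unfolding cadlag_paths_def by (cases "t = 0") auto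
  ultimately show ?thesis by simp
next
  case False
  define q where "q k = real_of_int \<lceil>2^k * t\<rceil> / 2^k" for k :: nat
  have q_nat: "real (nat \<lceil>2^k * t\<rceil>) / 2^k = q k" for k
    using False unfolding q_def by (simp add: zero_less_mult_iff)
  have q_lower: "t \<le> q k" for k
    using le_of_int_ceiling[of "2^k * t"] unfolding q_def by (simp add: field_simps)
  have q_upper: "q k \<le> t + (1/2)^k" for k
    using ceiling_correct[of "2^k * t"] unfolding q_def by (simp add: field_simps)
  have "(\<lambda>k. t + (1/2::real)^k) \<longlonglongrightarrow> t + 0"
    by (intro tendsto_intros) simp
  then have "q \<longlonglongrightarrow> t"
    using q_lower q_upper by (intro tendsto_sandwich[of "\<lambda>_. t" q _ "\<lambda>k. t + (1/2)^k"]) auto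
  moreover have "continuous (at t within {t..}) \<omega>"
    using assms False unfolding cadlag_paths_def at_within_Ici_at_right by auto
  ultimately have "(\<omega> \<circ> q) \<longlonglongrightarrow> \<omega> t"
    unfolding continuous_within_sequentially using q_lower by auto
  then show ?thesis unfolding q_nat comp_def .
qed

text \<open>The canonical process is jointly measurable in path and time: it is the pointwise limit of
its evaluations at the dyadic times \<open>\<lceil>2\<^sup>kt\<rceil>/2\<^sup>k\<close>, which converge to \<open>t\<close> from the right.\<close>
lemma measurable_path_eval_pair:
  "(\<lambda>p::(real \<Rightarrow> real^'n) \<times> real. fst p (snd p)) \<in> borel_measurable (Dmeas \<Otimes>\<^sub>M lborel)"
proof (rule borel_measurable_LIMSEQ_metric[where f="\<lambda>k p. fst p (real (nat \<lceil>2^k * snd p\<rceil>) / 2^k)"])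
  fix k :: nat
  show "(\<lambda>p::(real \<Rightarrow> real^'n) \<times> real. fst p (real (nat \<lceil>2^k * snd p\<rceil>) / 2^k))
      \<in> borel_measurable (Dmeas \<Otimes>\<^sub>M lborel)"
  proof (rule measurable_compose_countable'[where f="\<lambda>i p. fst p (real i / 2^k)" and I=UNIV])
    show "(\<lambda>p::(real \<Rightarrow> real^'n) \<times> real. fst p (real i / 2^k)) \<in> borel_measurable (Dmeas \<Otimes>\<^sub>M lborel)"
      for i :: nat
      by (rule measurable_compose[OF measurable_fst measurable_path_eval_Dmeas]) simp
  qed auto
next
  fix p :: "(real \<Rightarrow> real^'n) \<times> real"
  assume "p \<in> space (Dmeas \<Otimes>\<^sub>M lborel)"
  then have "fst p \<in> cadlag_paths" by (auto simp: space_pair_measure space_Dmeas)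
  then show "(\<lambda>k. fst p (real (nat \<lceil>2^k * snd p\<rceil>) / 2^k)) \<longlonglongrightarrow> fst p (snd p)"
    by (rule cadlag_path_dyadic_tendsto)
qed

definition discounted_occupation :: "'a set \<Rightarrow> (real \<Rightarrow> 'a) \<Rightarrow> real" where
  "discounted_occupation B \<omega> = (\<integral>t\<in>{0..}. exp (- t) * indicator B (\<omega> t) \<partial>lborel)"

lemma R1_indicator_eq: "R1 Px (indicator B) x = (\<integral>\<omega>. discounted_occupation B \<omega> \<partial>Px x)"
  unfolding R1_def discounted_occupation_def ..

lemma discounted_occupation_nonneg: "0 \<le> discounted_occupation B \<omega>"
  unfolding discounted_occupation_def set_lebesgue_integral_def
  by (intro Bochner_Integration.integral_nonneg) (simp add: indicator_def)

lemma has_bochner_integral_exp_minus_Ici: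
  "has_bochner_integral lborel (\<lambda>t::real. indicator {0..} t *\<^sub>R exp (- t)) 1"
  using has_bochner_integral_I0i_power_exp_m'[of 0] by (simp add: mult.commute)

lemma set_integrable_exp_minus_Ici: "set_integrable lborel {0..} (\<lambda>t::real. exp (- t))"
  unfolding set_integrable_def by (rule integrable.intros[OF has_bochner_integral_exp_minus_Ici])

lemma discounted_occupation_le_1: "discounted_occupation B \<omega> \<le> 1"
proof (cases "set_integrable lborel {0..} (\<lambda>t. exp (- t) * indicator B (\<omega> t) :: real)")
  case True
  then have "discounted_occupation B \<omega> \<le> (\<integral>t\<in>{0..}. exp (- t) \<partial>lborel)"
    unfolding discounted_occupation_def
    by (rule set_integral_mono[OF _ set_integrable_exp_minus_Ici]) (simp add: indicator_def)
  also have "\<dots> = 1"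
    using has_bochner_integral_exp_minus_Ici
    by (simp add: set_lebesgue_integral_def has_bochner_integral_integral_eq)
  finally show ?thesis .
next
  case False
  then show ?thesis
    by (simp add: discounted_occupation_def set_lebesgue_integral_def set_integrable_def
        not_integrable_integral_eq)
qed

lemma borel_measurable_discounted_occupation:
  assumes "B \<in> sets borel"
  shows "discounted_occupation B \<in> borel_measurable (Dmeas :: (real \<Rightarrow> real^'n) measure)"
proof -
  have "(\<lambda>p::(real \<Rightarrow> real^'n) \<times> real. indicator B (fst p (snd p)) :: real)
      \<in> borel_measurable (Dmeas \<Otimes>\<^sub>M lborel)"
    using measurable_compose[OF measurable_path_eval_pair borel_measurable_indicator[OF assms]]
    by simp
  then show ?thesis
    unfolding discounted_occupation_def set_lebesgue_integral_def
    by (intro lborel.borel_measurable_lebesgue_integral) (simp add: case_prod_beta)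
qed

lemma discounted_occupation_pos:
  fixes \<omega> :: "real \<Rightarrow> 'a::topological_space"
  assumes "continuous (at_right 0) \<omega>" and "\<omega> 0 \<in> interior B"
    and "(\<lambda>t. indicator B (\<omega> t) :: real) \<in> borel_measurable lborel"
  shows "0 < discounted_occupation B \<omega>"
proof -
  have "eventually (\<lambda>s. \<omega> s \<in> interior B) (at_right (0::real))"
    using assms(1,2) by (intro topological_tendstoD) (auto simp: continuous_within)
  then obtain b :: real where b: "b > 0" "\<And>s. 0 < s \<Longrightarrow> s < b \<Longrightarrow> \<omega> s \<in> B"
    unfolding eventually_at_right[OF zero_less_one] using interior_subset by blast
  let ?h = "\<lambda>t. indicator {0..} t * (exp (- t) * indicator B (\<omega> t)) :: real"
  have "integrable lborel (\<lambda>t::real. indicator {0..} t * exp (- t))"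
    using set_integrable_exp_minus_Ici by (simp add: set_integrable_def)
  moreover have "?h \<in> borel_measurable lborel"
    using assms(3) by measurable
  ultimately have h_integrable: "integrable lborel ?h"
    by (rule Bochner_Integration.integrable_bound) (auto simp: indicator_def)
  have "b * exp (- b) = (\<integral>t. indicator {0<..<b} t * exp (- b) \<partial>lborel)"
    using b by simp
  also have "\<dots> \<le> (\<integral>t. ?h t \<partial>lborel)"
  proof (rule integral_mono[OF _ h_integrable])
    show "integrable lborel (\<lambda>t::real. indicator {0<..<b} t * exp (- b))"
      using b by (intro integrable_mult_left integrable_real_indicator) auto
  qed (use b in \<open>auto simp: indicator_def\<close>)
  also have "\<dots> = discounted_occupation B \<omega>"
    by (simp add: discounted_occupation_def set_lebesgue_integral_def)
  finally have "b * exp (- b) \<le> discounted_occupation B \<omega>" .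
  moreover have "0 < b * exp (- b)"
    using b by simp
  ultimately show ?thesis
    by linarith
qed

lemma
  assumes "solves_MP \<alpha> a \<nu> P"
  shows sets_solves_MP: "sets P = sets Dmeas"
    and space_solves_MP: "space P = cadlag_paths"
    and prob_space_solves_MP: "prob_space P"
    and distr_start_solves_MP: "distr P borel (\<lambda>\<omega>. \<omega> 0) = \<nu>"
  using assms by (simp_all add: solves_MP_def space_Dmeas)

lemma solves_MP_start_AE:
  assumes "solves_MP \<alpha> a (return borel x) P"
  shows "AE \<omega> in P. \<omega> 0 = x"
proof (rule AE_distrD[where f="\<lambda>\<omega>. \<omega> 0"])
  show "(\<lambda>\<omega>. \<omega> 0) \<in> measurable P borel"
    using measurable_path_eval_Dmeas[of 0]
    by (simp add: measurable_cong_sets[OF sets_solves_MP[OF assms] refl])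
  show "AE y in distr P borel (\<lambda>\<omega>. \<omega> 0). y = x"
    unfolding distr_start_solves_MP[OF assms] by (simp add: AE_return)
qed

lemma borel_measurable_cadlag_path:
  assumes "\<omega> \<in> cadlag_paths"
  shows "(\<omega> :: real \<Rightarrow> real^'n) \<in> borel_measurable lborel"
  using measurable_Pair2[OF measurable_path_eval_pair, of \<omega>] assms by (simp add: space_Dmeas)

lemma
  assumes "solves_MP \<alpha> a \<nu> P" and "B \<in> sets borel"
  shows integrable_discounted_occupation: "integrable P (discounted_occupation B)"
    and integral_discounted_occupation_le_1: "(\<integral>\<omega>. discounted_occupation B \<omega> \<partial>P) \<le> 1"
proof -
  interpret prob_space P
    by (rule prob_space_solves_MP[OF assms(1)])
  have "discounted_occupation B \<in> borel_measurable P"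
    using borel_measurable_discounted_occupation[OF assms(2)]
    by (simp add: measurable_cong_sets[OF sets_solves_MP[OF assms(1)] refl])
  then show integrable: "integrable P (discounted_occupation B)"
    by (intro integrable_const_bound[where B=1])
      (simp_all add: discounted_occupation_nonneg discounted_occupation_le_1)
  have "(\<integral>\<omega>. discounted_occupation B \<omega> \<partial>P) \<le> (\<integral>\<omega>. 1 \<partial>P)"
    using integrable by (intro integral_mono) (simp_all add: discounted_occupation_le_1)
  then show "(\<integral>\<omega>. discounted_occupation B \<omega> \<partial>P) \<le> 1"
    by (simp add: prob_space)
qed

lemma integral_discounted_occupation_pos:
  assumes "solves_MP \<alpha> a (return borel x) P" and "B \<in> sets borel" and "x \<in> interior B"
  shows "0 < (\<integral>\<omega>. discounted_occupation B \<omega> \<partial>P)"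
proof -
  interpret prob_space P
    by (rule prob_space_solves_MP[OF assms(1)])
  have "AE \<omega> in P. 0 < discounted_occupation B \<omega>"
    using solves_MP_start_AE[OF assms(1)]
  proof (rule AE_mp, intro AE_I2 impI)
    fix \<omega> assume "\<omega> \<in> space P" and start: "\<omega> 0 = x"
    then have \<omega>: "\<omega> \<in> cadlag_paths"
      by (simp add: space_solves_MP[OF assms(1)])
    have "(\<lambda>t. indicator B (\<omega> t) :: real) \<in> borel_measurable lborel"
      using borel_measurable_cadlag_path[OF \<omega>] assms(2) by measurable
    moreover have "continuous (at_right 0) \<omega>"
      using \<omega> unfolding cadlag_paths_def by auto
    ultimately show "0 < discounted_occupation B \<omega>"
      using start assms(3) by (intro discounted_occupation_pos) simp_all
  qed
  moreover have "(\<integral>\<omega>. discounted_occupation B \<omega> \<partial>P) \<noteq> 0"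
  proof
    assume "(\<integral>\<omega>. discounted_occupation B \<omega> \<partial>P) = 0"
    then have "AE \<omega> in P. discounted_occupation B \<omega> = 0"
      using integrable_discounted_occupation[OF assms(1,2)]
      by (simp add: integral_nonneg_eq_0_iff_AE discounted_occupation_nonneg)
    moreover note \<open>AE \<omega> in P. 0 < discounted_occupation B \<omega>\<close>
    ultimately have "AE \<omega> in P. False"
      by eventually_elim simp
    then show False
      by (simp add: AE_False)
  qed
  moreover have "0 \<le> (\<integral>\<omega>. discounted_occupation B \<omega> \<partial>P)"
    by (simp add: discounted_occupation_nonneg)
  ultimately show ?thesis
    by linarith
qed

lemma suminf_half_powers_eq_0D:
  fixes f :: "nat \<Rightarrow> real"
  assumes "\<And>n. 0 \<le> f n" and "\<And>n. f n \<le> 1" and "(\<Sum>n. (1/2) ^ Suc n * f n) = 0"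
  shows "f n = 0"
proof -
  have "summable (\<lambda>n. (1/2::real) ^ Suc n * f n)"
  proof (rule summable_comparison_test)
    have "norm ((1/2::real) ^ Suc n * f n) \<le> (1/2) ^ n" for n
    proof -
      have "norm ((1/2::real) ^ Suc n * f n) \<le> (1/2) ^ Suc n"
        using assms(1,2)[of n] by (simp add: abs_mult mult_left_le_one_le)
      also have "\<dots> \<le> (1/2) ^ n"
        by simp
      finally show ?thesis .
    qed
    then show "\<exists>N. \<forall>n\<ge>N. norm ((1/2::real) ^ Suc n * f n) \<le> (1/2) ^ n"
      by blast
  qed (rule summable_geometric, simp)
  then show ?thesis
    using assms by (simp add: suminf_eq_zero_iff)
qed

lemma dense_range_meets_interior:
  assumes "closure (range xs) = UNIV" and "interior B \<noteq> {}"
  shows "\<exists>n. xs n \<in> interior B"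
  using open_Int_closure_eq_empty[OF open_interior, of B "range xs"] assms by auto

theorem propositionB1:
  fixes a :: "real^'n \<Rightarrow> real^'n^'n"
    and \<alpha> lam Lam :: real
    and Px :: "real^'n \<Rightarrow> (real \<Rightarrow> real^'n) measure"
    and xs :: "nat \<Rightarrow> real^'n"
    and B :: "(real^'n) set"
  assumes "0 < \<alpha>" "\<alpha> < 2" "0 < lam" "0 < Lam"
    and "continuous_on UNIV a"
    and "\<And>x. transpose (a x) = a x"
    and "\<And>x v. 0 \<le> v \<bullet> (a x *v v)"
    and "\<And>x. mat_norm1 (a x) \<le> Lam"
    and "\<And>x. mat_trace (a x) \<ge> lam"
    and "MP_well_posed \<alpha> a"
    and "\<And>x. solves_MP \<alpha> a (return borel x) (Px x)"
    and "closure (range xs) = UNIV"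
    and "B \<in> sets borel"
    and "(\<Sum>n. (1/2) ^ Suc n * R1 Px (indicator B) (xs n)) = 0"
  shows "closure (UNIV - B) = UNIV"
proof (rule ccontr)
  assume "closure (UNIV - B) \<noteq> UNIV"
  then have "interior B \<noteq> {}"
    using closure_complement[of B] by (auto simp: Compl_eq_Diff_UNIV[symmetric])
  then obtain n where n: "xs n \<in> interior B"
    using dense_range_meets_interior assms(12) by blast
  have "R1 Px (indicator B) (xs n) = 0"
  proof (rule suminf_half_powers_eq_0D)
    show "0 \<le> R1 Px (indicator B) (xs k)" for k
      by (simp add: R1_indicator_eq discounted_occupation_nonneg)
    show "R1 Px (indicator B) (xs k) \<le> 1" for k
      unfolding R1_indicator_eq using assms(11,13) by (rule integral_discounted_occupation_le_1)
  qed (rule assms(14))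
  then show False
    using integral_discounted_occupation_pos[OF assms(11,13) n] by (simp add: R1_indicator_eq)
qed

end
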